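(* Let $G=(N,A)$ be an $s$-$t$ directed graph and let $u,v\in N$. Suppose that $u$ $s$-dominates $v$ and that $v$ does not $t$-dominate $u$. Then every node $w$ that is $t$-dominated by $v$ is strictly $s$-dominated by $u$.
   Context: An $s$-$t$ directed graph is a directed graph (not necessarily acyclic) with a unique source $s$ and a unique sink $t$ such that every node is reachable from $s$ and every node reaches $t$. A node $a$ $s$-dominates $b$ if every $s$-$b$ path contains $a$ (every node $s$-dominates itself); $a$ strictly $s$-dominates $b$ if moreover $a\neq b$. A node $a$ $t$-dominates $b$ (equivalently, $b$ is $t$-dominated by $a$) if every $b$-$t$ path contains $a$. *)

theory Defs
  imports Main
begin

text \<open>A path from x to y is a nonempty list of nodes starting at x, ending at y,
whose consecutive nodes are joined by arcs (repeated nodes allowed; this does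
not affect domination).\<close>

definition is_path :: "('a \<times> 'a) set \<Rightarrow> 'a list \<Rightarrow> 'a \<Rightarrow> 'a \<Rightarrow> bool" where
  "is_path A p x y \<longleftrightarrow> p \<noteq> [] \<and> hd p = x \<and> last p = y \<and>
     (\<forall>i. Suc i < length p \<longrightarrow> (p ! i, p ! Suc i) \<in> A)"

definition reaches :: "('a \<times> 'a) set \<Rightarrow> 'a \<Rightarrow> 'a \<Rightarrow> bool" where
  "reaches A x y \<longleftrightarrow> (\<exists>p. is_path A p x y)"

definition is_source :: "'a set \<Rightarrow> ('a \<times> 'a) set \<Rightarrow> 'a \<Rightarrow> bool" where
  "is_source N A x \<longleftrightarrow> x \<in> N \<and> (\<forall>y. (y, x) \<notin> A)"

definition is_sink :: "'a set \<Rightarrow> ('a \<times> 'a) set \<Rightarrow> 'a \<Rightarrow> bool" where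
  "is_sink N A x \<longleftrightarrow> x \<in> N \<and> (\<forall>y. (x, y) \<notin> A)"

definition st_graph :: "'a set \<Rightarrow> ('a \<times> 'a) set \<Rightarrow> 'a \<Rightarrow> 'a \<Rightarrow> bool" where
  "st_graph N A s t \<longleftrightarrow> finite N \<and> A \<subseteq> N \<times> N \<and>
     {x. is_source N A x} = {s} \<and> {x. is_sink N A x} = {t} \<and>
     (\<forall>x\<in>N. reaches A s x \<and> reaches A x t)"

definition s_dominates :: "('a \<times> 'a) set \<Rightarrow> 'a \<Rightarrow> 'a \<Rightarrow> 'a \<Rightarrow> bool" where
  "s_dominates A s a b \<longleftrightarrow> (\<forall>p. is_path A p s b \<longrightarrow> a \<in> set p)"

definition strictly_s_dominates :: "('a \<times> 'a) set \<Rightarrow> 'a \<Rightarrow> 'a \<Rightarrow> 'a \<Rightarrow> bool" where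
  "strictly_s_dominates A s a b \<longleftrightarrow> s_dominates A s a b \<and> a \<noteq> b"

definition t_dominates :: "('a \<times> 'a) set \<Rightarrow> 'a \<Rightarrow> 'a \<Rightarrow> 'a \<Rightarrow> bool" where
  "t_dominates A t a b \<longleftrightarrow> (\<forall>p. is_path A p b t \<longrightarrow> a \<in> set p)"

end

theory Submission
  imports Defs
begin

text \<open>Let v t-dominate w and pick a w-t path; cut it at the first occurrence of v, giving a
w-v path r on which v occurs only at the end. If u occurred on r, the part of r up to u
followed by a u-t path avoiding v would be a w-t path avoiding v. Hence r avoids u, and
since u s-dominates v, every s-w path extended by r already contains u.\<close>

lemma is_path_singleton: "is_path A [a] x y \<longleftrightarrow> a = x \<and> a = y"
  by (auto simp: is_path_def)

lemma is_path_Cons_Cons: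
  "is_path A (a # b # l) x y \<longleftrightarrow> a = x \<and> (a, b) \<in> A \<and> is_path A (b # l) b y"
  unfolding is_path_def by (auto simp: nth_Cons split: nat.splits)

lemma is_path_hd: "is_path A p x y \<Longrightarrow> p = x # tl p"
  by (cases p) (auto simp: is_path_def)

lemma is_path_append:
  assumes "is_path A p x y" and "is_path A q y z"
  shows "is_path A (p @ tl q) x z"
  using assms(1)
proof (induction p arbitrary: x rule: induct_list012)
  case 1
  then show ?case by (simp add: is_path_def)
next
  case (2 a)
  then have "a = x" "x = y" by (auto simp: is_path_singleton)
  then show ?case using is_path_hd[OF assms(2)] assms(2) by (metis append_Cons append_Nil)
next
  case (3 a b l)
  then show ?case by (auto simp: is_path_Cons_Cons)
qed

lemma is_path_prefix: "is_path A (xs @ y # ys) x z \<Longrightarrow> is_path A (xs @ [y]) x y"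
proof (induction xs arbitrary: x rule: induct_list012)
  case (3 a b l)
  then show ?case by (auto simp: is_path_Cons_Cons)
qed (auto simp: is_path_def is_path_Cons_Cons)

lemma t_dominates_self: "t_dominates A t a a"
  unfolding t_dominates_def by (metis is_path_hd list.set_intros(1))

lemma t_dominates_along_avoiding_path:
  assumes "t_dominates A t v w" and "is_path A r w u" and "v \<notin> set r"
  shows "t_dominates A t v u"
  unfolding t_dominates_def
proof (intro allI impI)
  fix q assume "is_path A q u t"
  then have "v \<in> set (r @ tl q)"
    using assms(1) is_path_append[OF assms(2)] unfolding t_dominates_def by blast
  then show "v \<in> set q" using assms(3) by (cases q) auto
qed

lemma s_dominates_along_avoiding_path:
  assumes "s_dominates A s u v" and "is_path A r w v" and "u \<notin> set r"
  shows "s_dominates A s u w"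
  unfolding s_dominates_def
proof (intro allI impI)
  fix p assume "is_path A p s w"
  then have "u \<in> set (p @ tl r)"
    using assms(1) is_path_append[OF _ assms(2)] unfolding s_dominates_def by blast
  then show "u \<in> set p" using assms(3) by (cases r) auto
qed

theorem lemma8:
  assumes "st_graph N A s t"
    and "u \<in> N" and "v \<in> N"
    and "s_dominates A s u v"
    and "\<not> t_dominates A t v u"
  shows "\<forall>w\<in>N. t_dominates A t v w \<longrightarrow> strictly_s_dominates A s u w"
proof (intro ballI impI)
  fix w assume "w \<in> N" and v_tdom_w: "t_dominates A t v w"
  have "u \<noteq> v" using assms(5) t_dominates_self by metis
  have "u \<noteq> w" using assms(5) v_tdom_w by blast
  obtain r where "is_path A r w t"
    using assms(1) \<open>w \<in> N\<close> unfolding st_graph_def reaches_def by blast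
  with v_tdom_w have "v \<in> set r" unfolding t_dominates_def by blast
  then obtain r1 r2 where r: "r = r1 @ v # r2" "v \<notin> set r1" by (meson split_list_first)
  have "u \<notin> set r1"
  proof
    assume "u \<in> set r1"
    then obtain a b where "r1 = a @ u # b" by (meson split_list)
    then have "is_path A (a @ [u]) w u"
      using is_path_prefix \<open>is_path A r w t\<close> r(1) by (metis append.assoc append_Cons)
    moreover have "v \<notin> set (a @ [u])" using r(2) \<open>r1 = a @ u # b\<close> \<open>u \<noteq> v\<close> by auto
    ultimately show False
      using t_dominates_along_avoiding_path[OF v_tdom_w] assms(5) by blast
  qed
  moreover have "is_path A (r1 @ [v]) w v"
    using \<open>is_path A r w t\<close> unfolding r(1) by (rule is_path_prefix)
  ultimately have "s_dominates A s u w"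
    using s_dominates_along_avoiding_path assms(4) \<open>u \<noteq> v\<close> by fastforce
  with \<open>u \<noteq> w\<close> show "strictly_s_dominates A s u w"
    by (simp add: strictly_s_dominates_def)
qed

end
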